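(* Let $d\in\mathbb N\cup\{\infty\}$, $C>0$, and let ${\boldsymbol\gamma}$ be POD weights with constants $a,C_a$. Put $c:=\sum_{w\in\mathcal U_d}(|w|!)^a\prod_{j\in w}(2^aC^2\gamma_j)\in[1,\infty]$. (1) If ${\boldsymbol\gamma}\in\mathcal S_{d,C}$, then ${\boldsymbol\eta}\le T^\uparrow_{d,C}{\boldsymbol\gamma}\le c\,{\boldsymbol\xi}$, where $\eta_u=C^{2|u|}\gamma_u$ and $\xi_u=C_a(|u|!)^a\prod_{j\in u}(2^aC^2\gamma_j)$. (2) If ${\boldsymbol\gamma}\in\mathcal M_d$, then $\mathbf 0\le T^\downarrow_{d,C}{\boldsymbol\gamma}\le{\boldsymbol\zeta}$, where $\zeta_u=C^{-2|u|}\gamma_u$.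
   Context: Write $[d]=\{1,\dots,d\}$ if $d\in\mathbb N$ and $[d]=\mathbb N$ if $d=\infty$; $[s]=\{1,\dots,s\}$. $\mathcal U_d$ is the set of finite subsets of $[d]$; weights are families $(\gamma_u)_{u\in\mathcal U_d}$ of non-negative reals ($\mathcal W_d$), compared componentwise; $\mathbf 0$ is the zero family. POD weights: $\gamma_u=\Gamma_{|u|}\prod_{j\in u}\gamma_j$ for a non-increasing sequence $(\gamma_j)_{j\in[d]}$ of non-negative reals and non-negative reals $(\Gamma_k)_{k\in[d]\cup\{0\}}$ with $\Gamma_k\le C_a(k!)^a$ for all $k$, for some constants $a,C_a>0$. $(\Delta_v{\boldsymbol\gamma})_u=\sum_{w\subseteq v}(-1)^{|w|}\gamma_{u\cup w}$; $\mathcal M_d$ is the set of weights with $\Delta_v{\boldsymbol\gamma}\ge\mathbf 0$ for all $v$. For $C>0$: $\mathcal S_{d,C}=\{{\boldsymbol\gamma}\in\mathcal W_d:\sum_vC^{2|v|}\gamma_v<\infty\}$; $(T^\uparrow_{d,C}{\boldsymbol\gamma})_u=\sum_{v\supseteq u}C^{2|v|}\gamma_v$ on $\mathcal S_{d,C}$; on $\mathcal M_d$, $(T^\downarrow_{d,C}{\boldsymbol\gamma})_u=C^{-2|u|}(\Delta_{[d]\setminus u}{\boldsymbol\gamma})_u$ if $d\in\mathbb N$ and $C^{-2|u|}\lim_{s\to\infty}(\Delta_{[s]\setminus u}{\boldsymbol\gamma})_u$ if $d=\infty$. *)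

theory Defs
  imports "HOL-Analysis.Analysis" "HOL-Library.Extended_Nat"
begin

definition idx :: "enat \<Rightarrow> nat set" where
  "idx d = {j. 1 \<le> j \<and> enat j \<le> d}"

definition U :: "enat \<Rightarrow> nat set set" where
  "U d = {u. finite u \<and> u \<subseteq> idx d}"

definition is_weight :: "enat \<Rightarrow> (nat set \<Rightarrow> real) \<Rightarrow> bool" where
  "is_weight d \<gamma> \<longleftrightarrow> (\<forall>u\<in>U d. 0 \<le> \<gamma> u)"

definition is_POD :: "enat \<Rightarrow> (nat set \<Rightarrow> real) \<Rightarrow> (nat \<Rightarrow> real) \<Rightarrow> (nat \<Rightarrow> real)
    \<Rightarrow> real \<Rightarrow> real \<Rightarrow> bool" where
  "is_POD d \<gamma> gs Gam a Ca \<longleftrightarrow>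
     0 < a \<and> 0 < Ca \<and>
     (\<forall>j\<in>idx d. 0 \<le> gs j) \<and>
     (\<forall>i\<in>idx d. \<forall>j\<in>idx d. i \<le> j \<longrightarrow> gs j \<le> gs i) \<and>
     (\<forall>k. enat k \<le> d \<longrightarrow> 0 \<le> Gam k \<and> Gam k \<le> Ca * (fact k) powr a) \<and>
     (\<forall>u\<in>U d. \<gamma> u = Gam (card u) * (\<Prod>j\<in>u. gs j))"

definition Delta :: "nat set \<Rightarrow> (nat set \<Rightarrow> real) \<Rightarrow> nat set \<Rightarrow> real" where
  "Delta v \<gamma> u = (\<Sum>w\<in>Pow v. (-1) ^ card w * \<gamma> (u \<union> w))"

definition in_M :: "enat \<Rightarrow> (nat set \<Rightarrow> real) \<Rightarrow> bool" where
  "in_M d \<gamma> \<longleftrightarrow> is_weight d \<gamma> \<and> (\<forall>v\<in>U d. \<forall>u\<in>U d. 0 \<le> Delta v \<gamma> u)"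

definition in_S :: "enat \<Rightarrow> real \<Rightarrow> (nat set \<Rightarrow> real) \<Rightarrow> bool" where
  "in_S d C \<gamma> \<longleftrightarrow> is_weight d \<gamma> \<and> (\<lambda>v. C ^ (2 * card v) * \<gamma> v) summable_on U d"

definition T_up :: "enat \<Rightarrow> real \<Rightarrow> (nat set \<Rightarrow> real) \<Rightarrow> nat set \<Rightarrow> real" where
  "T_up d C \<gamma> u = (\<Sum>\<^sub>\<infinity>v\<in>{v\<in>U d. u \<subseteq> v}. C ^ (2 * card v) * \<gamma> v)"

definition T_down :: "enat \<Rightarrow> real \<Rightarrow> (nat set \<Rightarrow> real) \<Rightarrow> nat set \<Rightarrow> real" where
  "T_down d C \<gamma> u =
     (if d = \<infinity> then lim (\<lambda>s. Delta ({1..s} - u) \<gamma> u) / C ^ (2 * card u)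
      else Delta (idx d - u) \<gamma> u / C ^ (2 * card u))"

end

theory Submission imports Defs begin

text \<open>
  Upper bound: for \<open>v \<supseteq> u\<close> the inequality \<open>(|u| + |w|)! \<le> 2\<^bsup>|u|+|w|\<^esup> |u|! |w|!\<close>, with
  \<open>w = v - u\<close>, bounds the term \<open>C\<^bsup>2|v|\<^esup>\<gamma>\<^sub>v\<close> of \<open>T\<^sup>\<up>\<gamma>\<close> by \<open>\<xi>\<^sub>u\<close> times the term of \<open>c\<close> at \<open>w\<close>;
  as \<open>v \<mapsto> v - u\<close> is injective on the supersets of \<open>u\<close>, summing gives \<open>T\<^sup>\<up>\<gamma> \<le> c \<xi>\<close>.
  Lower bound: \<open>\<Delta>\<^bsub>v \<union> {j}\<^esub>\<gamma>\<^sub>u = \<Delta>\<^sub>v\<gamma>\<^sub>u - \<Delta>\<^sub>v\<gamma>\<^bsub>u \<union> {j}\<^esub>\<close>, so for \<open>\<gamma> \<in> M\<^sub>d\<close> the differences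
  \<open>\<Delta>\<^sub>v\<gamma>\<^sub>u\<close> decrease in \<open>v\<close> and lie in \<open>[0, \<gamma>\<^sub>u]\<close>; for \<open>d = \<infinity>\<close> the limit defining \<open>T\<^sup>\<down>\<close>
  is that of a bounded decreasing sequence.
\<close>

lemma card_le_of_mem_U: "v \<in> U d \<Longrightarrow> enat (card v) \<le> d"
proof (cases d)
  case (enat n)
  assume "v \<in> U d"
  then have "v \<subseteq> {1..n}" using enat unfolding U_def idx_def by auto
  then have "card v \<le> n" using card_mono[of "{1..n}" v] by simp
  then show ?thesis using enat by simp
qed simp

lemma U_subset: "v \<in> U d \<Longrightarrow> w \<subseteq> v \<Longrightarrow> w \<in> U d"
  unfolding U_def by (auto intro: finite_subset)

lemma empty_in_U: "{} \<in> U d"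
  unfolding U_def by simp

lemma Delta_empty [simp]: "Delta {} \<gamma> u = \<gamma> u"
  by (simp add: Delta_def)

lemma Delta_insert:
  assumes "finite v" "j \<notin> v"
  shows "Delta (insert j v) \<gamma> u = Delta v \<gamma> u - Delta v \<gamma> (insert j u)"
proof -
  have disjoint: "Pow v \<inter> insert j ` Pow v = {}" using assms by auto
  have inj: "inj_on (insert j) (Pow v)"
    using assms by (intro inj_on_inverseI[where g = "\<lambda>w. w - {j}"]) auto
  have "Delta (insert j v) \<gamma> u = Delta v \<gamma> u
      + (\<Sum>w\<in>insert j ` Pow v. (-1) ^ card w * \<gamma> (u \<union> w))"
    unfolding Delta_def Pow_insert using assms disjoint by (simp add: sum.union_disjoint)
  also have "(\<Sum>w\<in>insert j ` Pow v. (-1) ^ card w * \<gamma> (u \<union> w))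
      = (\<Sum>w\<in>Pow v. (-1) ^ card (insert j w) * \<gamma> (u \<union> insert j w))"
    using inj by (simp add: sum.reindex)
  also have "\<dots> = - Delta v \<gamma> (insert j u)"
    unfolding Delta_def sum_negf[symmetric]
  proof (rule sum.cong)
    fix w assume "w \<in> Pow v"
    then have "finite w" "j \<notin> w" using assms finite_subset by auto
    then show "(-1) ^ card (insert j w) * \<gamma> (u \<union> insert j w)
        = - ((-1) ^ card w * \<gamma> (insert j u \<union> w))"
      by simp
  qed simp
  finally show ?thesis by simp
qed

lemma Delta_nonneg: "in_M d \<gamma> \<Longrightarrow> v \<in> U d \<Longrightarrow> u \<in> U d \<Longrightarrow> 0 \<le> Delta v \<gamma> u"
  unfolding in_M_def by blast

lemma Delta_insert_le:
  assumes "in_M d \<gamma>" "u \<in> U d" "insert j v \<in> U d" "j \<notin> v"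
  shows "Delta (insert j v) \<gamma> u \<le> Delta v \<gamma> u"
proof -
  have "v \<in> U d" "insert j u \<in> U d" using assms unfolding U_def by auto
  then have "0 \<le> Delta v \<gamma> (insert j u)" by (rule Delta_nonneg[OF assms(1)])
  moreover have "finite v" using \<open>v \<in> U d\<close> unfolding U_def by simp
  ultimately show ?thesis using Delta_insert[OF _ assms(4)] by simp
qed

lemma Delta_antimono:
  assumes M: "in_M d \<gamma>" and u: "u \<in> U d" and "v \<subseteq> v'" "v' \<in> U d"
  shows "Delta v' \<gamma> u \<le> Delta v \<gamma> u"
proof -
  have "Delta (v \<union> A) \<gamma> u \<le> Delta v \<gamma> u" if "finite A" "v \<union> A \<in> U d" for A
    using that
  proof (induction A rule: finite_induct)
    case (insert j A)
    have "v \<union> A \<in> U d" using insert.prems by (rule U_subset) auto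
    show ?case
    proof (cases "j \<in> v \<union> A")
      case True
      then have "v \<union> insert j A = v \<union> A" by auto
      then show ?thesis using insert.IH \<open>v \<union> A \<in> U d\<close> by simp
    next
      case False
      have "Delta (insert j (v \<union> A)) \<gamma> u \<le> Delta (v \<union> A) \<gamma> u"
        using Delta_insert_le[OF M u _ False] insert.prems by simp
      then show ?thesis using insert.IH \<open>v \<union> A \<in> U d\<close> by simp
    qed
  qed simp
  moreover have "finite (v' - v)" "v \<union> (v' - v) = v'"
    using assms(3,4) unfolding U_def by auto
  ultimately show ?thesis using assms(4) by metis
qed

lemma Delta_le_self: "in_M d \<gamma> \<Longrightarrow> u \<in> U d \<Longrightarrow> v \<in> U d \<Longrightarrow> Delta v \<gamma> u \<le> \<gamma> u"
  using Delta_antimono[of d \<gamma> u "{}" v] by simp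

lemma T_down_bounds:
  assumes C: "0 < C" and M: "in_M d \<gamma>" and u: "u \<in> U d"
  shows "0 \<le> T_down d C \<gamma> u \<and> T_down d C \<gamma> u \<le> \<gamma> u / C ^ (2 * card u)"
proof -
  obtain L where L: "T_down d C \<gamma> u = L / C ^ (2 * card u)" "0 \<le> L" "L \<le> \<gamma> u"
  proof (cases "d = \<infinity>")
    case True
    define X where "X s = Delta ({1..s} - u) \<gamma> u" for s
    have in_U: "{1..s} - u \<in> U d" for s
      using True unfolding U_def idx_def by auto
    have "decseq X"
      unfolding decseq_def X_def using in_U by (auto intro!: Delta_antimono[OF M u])
    moreover have X_nonneg: "0 \<le> X s" for s
      unfolding X_def using M in_U u by (rule Delta_nonneg)
    ultimately obtain L where L: "X \<longlonglongrightarrow> L" "\<forall>s. L \<le> X s"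
      using decseq_convergent by blast
    have "T_down d C \<gamma> u = L / C ^ (2 * card u)"
      using True limI[OF L(1)] unfolding T_down_def X_def by simp
    moreover have "0 \<le> L" using L(1) X_nonneg by (intro LIMSEQ_le_const) auto
    moreover have "L \<le> \<gamma> u" using L(2) by (auto simp: X_def dest: spec[of _ 0])
    ultimately show ?thesis by (rule that)
  next
    case False
    then have "idx d - u \<in> U d"
      unfolding U_def idx_def by (auto intro: finite_subset[of _ "{..the_enat d}"])
    then show ?thesis
      using that[of "Delta (idx d - u) \<gamma> u"] False Delta_nonneg[OF M _ u] Delta_le_self[OF M u]
      unfolding T_down_def by simp
  qed
  moreover have "0 < C ^ (2 * card u)" using C by simp
  ultimately show ?thesis by (simp add: divide_right_mono)
qed

lemma fact_add_le_pow2_mult: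
  "(fact (m + n) :: 'a::linordered_semidom) \<le> 2 ^ (m + n) * fact m * fact n"
proof -
  have "fact (m + n) = fact m * fact n * ((m + n) choose m)"
    using binomial_fact_lemma[of m "m + n"] by simp
  also have "\<dots> \<le> fact m * fact n * 2 ^ (m + n)"
    by (intro mult_left_mono binomial_le_pow2) simp
  finally have "of_nat (fact (m + n)) \<le> (of_nat (2 ^ (m + n) * fact m * fact n) :: 'a)"
    unfolding of_nat_le_iff by (simp add: mult_ac)
  then show ?thesis by simp
qed

lemma fact_add_powr_le:
  assumes "0 \<le> (a::real)"
  shows "fact (m + n) powr a \<le> (2 powr a) ^ (m + n) * fact m powr a * fact n powr a"
proof -
  have "fact (m + n) powr a \<le> (2 ^ (m + n) * fact m * fact n) powr a"
    by (rule powr_mono2[OF assms _ fact_add_le_pow2_mult]) simp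
  also have "\<dots> = (2 ^ (m + n)) powr a * fact m powr a * fact n powr a"
    by (simp add: powr_mult)
  also have "(2 ^ (m + n) :: real) powr a = (2 powr a) ^ (m + n)"
    by (simp add: powr_realpow[symmetric] powr_powr mult.commute powr_power)
  finally show ?thesis .
qed

definition pod_factor :: "real \<Rightarrow> real \<Rightarrow> (nat \<Rightarrow> real) \<Rightarrow> nat set \<Rightarrow> real" where
  "pod_factor a K gs w = fact (card w) powr a * (\<Prod>j\<in>w. K * gs j)"

lemma pod_factor_nonneg:
  "0 \<le> K \<Longrightarrow> (\<And>j. j \<in> w \<Longrightarrow> 0 \<le> gs j) \<Longrightarrow> 0 \<le> pod_factor a K gs w"
  unfolding pod_factor_def by (simp add: prod_nonneg)

lemma POD_seq_nonneg: "is_POD d \<gamma> gs Gam a Ca \<Longrightarrow> w \<in> U d \<Longrightarrow> j \<in> w \<Longrightarrow> 0 \<le> gs j"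
  unfolding is_POD_def U_def by blast

lemma POD_term_le_split:
  fixes C :: real
  assumes pod: "is_POD d \<gamma> gs Gam a Ca" and v: "v \<in> U d" and "u \<subseteq> v"
  defines "K \<equiv> 2 powr a * C\<^sup>2"
  shows "C ^ (2 * card v) * \<gamma> v \<le> Ca * pod_factor a K gs u * pod_factor a K gs (v - u)"
proof -
  from pod have a: "0 < a" and Ca: "0 < Ca"
    and Gam: "Gam (card v) \<le> Ca * fact (card v) powr a"
    and \<gamma>_v: "\<gamma> v = Gam (card v) * (\<Prod>j\<in>v. gs j)"
    using v card_le_of_mem_U[OF v] unfolding is_POD_def by auto
  have "finite v" using v unfolding U_def by simp
  then have card_v: "card v = card u + card (v - u)"
    using \<open>u \<subseteq> v\<close> by (metis card_Diff_subset card_mono finite_subset le_add_diff_inverse)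
  have prod_nonneg: "0 \<le> (\<Prod>j\<in>v. gs j)"
    using POD_seq_nonneg[OF pod v] by (simp add: prod_nonneg)
  have C_pow: "0 \<le> C ^ (2 * card v)" by (simp add: power_mult)
  have "C ^ (2 * card v) * \<gamma> v \<le> C ^ (2 * card v) * (Ca * fact (card v) powr a * (\<Prod>j\<in>v. gs j))"
    unfolding \<gamma>_v using Gam prod_nonneg C_pow by (intro mult_left_mono mult_right_mono) auto
  also have "\<dots> \<le> C ^ (2 * card v) * (Ca * ((2 powr a) ^ card v * fact (card u) powr a
      * fact (card (v - u)) powr a) * (\<Prod>j\<in>v. gs j))"
    using fact_add_powr_le[of a "card u" "card (v - u)"] a Ca card_v prod_nonneg C_pow
    by (intro mult_left_mono mult_right_mono) auto
  also have "\<dots> = Ca * fact (card u) powr a * fact (card (v - u)) powr a * (\<Prod>j\<in>v. K * gs j)"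
    unfolding K_def power_mult power_mult_distrib prod.distrib by (simp add: mult_ac)
  also have "(\<Prod>j\<in>v. K * gs j) = (\<Prod>j\<in>u. K * gs j) * (\<Prod>j\<in>v - u. K * gs j)"
    using prod.subset_diff[OF \<open>u \<subseteq> v\<close> \<open>finite v\<close>] by (simp add: mult.commute)
  finally show ?thesis unfolding pod_factor_def by (simp add: mult_ac)
qed

lemma ennreal_sum_le_infsum:
  fixes f :: "'a \<Rightarrow> real"
  assumes "finite G" "G \<subseteq> W" "\<And>w. w \<in> G \<Longrightarrow> 0 \<le> f w"
  shows "ennreal (sum f G) \<le> (\<Sum>\<^sub>\<infinity>w\<in>W. ennreal (f w))"
proof -
  have "ennreal (sum f G) = (\<Sum>\<^sub>\<infinity>w\<in>G. ennreal (f w))"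
    using assms by (simp add: sum_ennreal)
  also have "\<dots> \<le> (\<Sum>\<^sub>\<infinity>w\<in>W. ennreal (f w))"
    using assms(2) by (intro infsum_mono_neutral nonneg_summable_on_complete) auto
  finally show ?thesis .
qed

lemma ennreal_infsum_le_reindex:
  fixes t :: "'a \<Rightarrow> real" and f :: "'b \<Rightarrow> real"
  assumes t: "t summable_on S" "\<And>x. x \<in> S \<Longrightarrow> 0 \<le> t x"
    and f: "\<And>w. w \<in> W \<Longrightarrow> 0 \<le> f w" and A: "0 \<le> A"
    and g: "inj_on g S" "g ` S \<subseteq> W"
    and le: "\<And>x. x \<in> S \<Longrightarrow> t x \<le> A * f (g x)"
  shows "ennreal (infsum t S) \<le> ennreal A * (\<Sum>\<^sub>\<infinity>w\<in>W. ennreal (f w))"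
proof -
  have "ennreal (infsum t S) = (SUP F\<in>{F. finite F \<and> F \<subseteq> S}. ennreal (sum t F))"
    using t by (rule infsum_nonneg_is_SUPREMUM_ennreal)
  also have "\<dots> \<le> ennreal A * (\<Sum>\<^sub>\<infinity>w\<in>W. ennreal (f w))"
  proof (rule SUP_least)
    fix F assume "F \<in> {F. finite F \<and> F \<subseteq> S}"
    then have F: "finite F" "F \<subseteq> S" by auto
    have G: "finite (g ` F)" "g ` F \<subseteq> W" "\<And>w. w \<in> g ` F \<Longrightarrow> 0 \<le> f w"
      using F g f by auto
    have "sum t F \<le> (\<Sum>x\<in>F. A * f (g x))"
      using F le by (intro sum_mono) auto
    also have "\<dots> = A * sum f (g ` F)"
      using inj_on_subset[OF g(1) F(2)] by (simp add: sum.reindex sum_distrib_left)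
    finally have "ennreal (sum t F) \<le> ennreal (A * sum f (g ` F))"
      by (rule ennreal_leI)
    also have "\<dots> = ennreal A * ennreal (sum f (g ` F))"
      using A G(3) by (simp add: ennreal_mult sum_nonneg)
    also have "\<dots> \<le> ennreal A * (\<Sum>\<^sub>\<infinity>w\<in>W. ennreal (f w))"
      using G by (intro mult_left_mono ennreal_sum_le_infsum) auto
    finally show "ennreal (sum t F) \<le> ennreal A * (\<Sum>\<^sub>\<infinity>w\<in>W. ennreal (f w))" .
  qed
  finally show ?thesis .
qed

lemma T_up_lower_bound:
  assumes S: "in_S d C \<gamma>" and u: "u \<in> U d"
  shows "C ^ (2 * card u) * \<gamma> u \<le> T_up d C \<gamma> u"
proof -
  have "(\<Sum>v\<in>{u}. C ^ (2 * card v) * \<gamma> v) \<le> T_up d C \<gamma> u"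
    unfolding T_up_def
  proof (rule finite_sum_le_infsum)
    show "(\<lambda>v. C ^ (2 * card v) * \<gamma> v) summable_on {v \<in> U d. u \<subseteq> v}"
      using S unfolding in_S_def by (auto intro: summable_on_subset)
    show "0 \<le> C ^ (2 * card v) * \<gamma> v" if "v \<in> {v \<in> U d. u \<subseteq> v} - {u}" for v
      using S that unfolding in_S_def is_weight_def by (simp add: power_mult)
  qed (use u in auto)
  then show ?thesis by simp
qed

lemma T_up_upper_bound:
  assumes pod: "is_POD d \<gamma> gs Gam a Ca" and S: "in_S d C \<gamma>" and u: "u \<in> U d"
  defines "K \<equiv> 2 powr a * C\<^sup>2"
  shows "ennreal (T_up d C \<gamma> u)
    \<le> ennreal (Ca * pod_factor a K gs u) * (\<Sum>\<^sub>\<infinity>w\<in>U d. ennreal (pod_factor a K gs w))"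
  unfolding T_up_def
proof (rule ennreal_infsum_le_reindex[where g = "\<lambda>v. v - u"])
  show "(\<lambda>v. C ^ (2 * card v) * \<gamma> v) summable_on {v \<in> U d. u \<subseteq> v}"
    using S unfolding in_S_def by (auto intro: summable_on_subset)
  show "0 \<le> C ^ (2 * card v) * \<gamma> v" if "v \<in> {v \<in> U d. u \<subseteq> v}" for v
    using S that unfolding in_S_def is_weight_def by simp
  have "0 \<le> K" unfolding K_def by simp
  then show factor_nonneg: "0 \<le> pod_factor a K gs w" if "w \<in> U d" for w
    using POD_seq_nonneg[OF pod that] by (rule pod_factor_nonneg)
  show "0 \<le> Ca * pod_factor a K gs u"
    using pod factor_nonneg[OF u] unfolding is_POD_def by simp
  show "inj_on (\<lambda>v. v - u) {v \<in> U d. u \<subseteq> v}" "(\<lambda>v. v - u) ` {v \<in> U d. u \<subseteq> v} \<subseteq> U d"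
    unfolding inj_on_def U_def by auto
  show "C ^ (2 * card v) * \<gamma> v \<le> Ca * pod_factor a K gs u * pod_factor a K gs (v - u)"
    if "v \<in> {v \<in> U d. u \<subseteq> v}" for v
    using POD_term_le_split[OF pod] that unfolding K_def by simp
qed

theorem mainTheorem9:
  fixes d :: enat and C a Ca :: real and \<gamma> :: "nat set \<Rightarrow> real"
    and gs Gam :: "nat \<Rightarrow> real" and c :: ennreal
  assumes C: "0 < C"
    and pod: "is_weight d \<gamma>" "is_POD d \<gamma> gs Gam a Ca"
    and c_def: "c = (\<Sum>\<^sub>\<infinity>w\<in>U d. ennreal (fact (card w) powr a * (\<Prod>j\<in>w. 2 powr a * C\<^sup>2 * gs j)))"
  shows "1 \<le> c \<and>
         (in_S d C \<gamma> \<longrightarrow> (\<forall>u\<in>U d.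
           C ^ (2 * card u) * \<gamma> u \<le> T_up d C \<gamma> u \<and>
           ennreal (T_up d C \<gamma> u) \<le>
             c * ennreal (Ca * fact (card u) powr a * (\<Prod>j\<in>u. 2 powr a * C\<^sup>2 * gs j)))) \<and>
         (in_M d \<gamma> \<longrightarrow> (\<forall>u\<in>U d.
           0 \<le> T_down d C \<gamma> u \<and> T_down d C \<gamma> u \<le> \<gamma> u / C ^ (2 * card u)))"
proof -
  define f where "f = pod_factor a (2 powr a * C\<^sup>2) gs"
  have c_f: "c = (\<Sum>\<^sub>\<infinity>w\<in>U d. ennreal (f w))"
    unfolding c_def f_def pod_factor_def ..
  have "ennreal (sum f {{}}) \<le> c"
    unfolding c_f using empty_in_U by (intro ennreal_sum_le_infsum) (auto simp: f_def pod_factor_def)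
  then have "1 \<le> c" by (simp add: f_def pod_factor_def)
  moreover have "ennreal (T_up d C \<gamma> u)
      \<le> c * ennreal (Ca * fact (card u) powr a * (\<Prod>j\<in>u. 2 powr a * C\<^sup>2 * gs j))"
    if "in_S d C \<gamma>" "u \<in> U d" for u
    using T_up_upper_bound[OF pod(2) that] unfolding c_f f_def
    by (simp add: pod_factor_def mult.assoc mult.commute)
  ultimately show ?thesis using T_up_lower_bound T_down_bounds[OF C] by blast
qed

end
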